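(* Let $B=\bigoplus_{i\in\mathbb{Z}}\mathbb{Z}_2$ and $L_2=B\rtimes\mathbb{Z}$ the lamplighter group (with $\mathbb{Z}=\langle t\rangle$ acting by shifting indices), equipped with a word metric from a finite generating set. There exist quasi-isometries $\Psi:L_2\to L_2$ that coarsely permute the left cosets of $\langle t\rangle$ such that the induced permutation $\psi:B\to B$ is not a generalized affine map.
   Context: Elements of $L_2$ are written $((x_i),k)$ with $((x_i),k)((y_i),\ell)=((x_i+y_{i-k}),k+\ell)$ and $t=(0,1)$. A quasi-isometry $\Psi$ coarsely permutes the left cosets of $\langle t\rangle$ if there are a permutation $\sigma$ of these cosets and $C'\ge0$ with $d_{\mathcal H}(\Psi(g\langle t\rangle),\sigma(g\langle t\rangle))<C'$ for all $g$ ($d_{\mathcal H}$ = Hausdorff distance). The coset $((x_i),k)\langle t\rangle$ is identified with $(x_i)\in B$, giving the induced permutation $\psi$ of $B$. An affine map of $B$ is a map $x\mapsto\varphi(x)+c$ with $\varphi$ a group automorphism of $B$ and $c\in B$; a generalized affine map is a composition of an affine map with a shift $(x_i)\mapsto(x_{i+k})$, $k\in\mathbb{Z}$. *)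

theory Defs
  imports Main "HOL-Library.Extended_Nat"
begin

text \<open>An element (x_i) of B is represented by its (finite) support {i. x_i = 1}.\<close>

typedef B = "{X :: int set. finite X}" morphisms supp Abs_B
  by auto

definition B_zero :: B where
  "B_zero = Abs_B {}"

definition B_add :: "B \<Rightarrow> B \<Rightarrow> B" where
  "B_add x y = Abs_B ((supp x - supp y) \<union> (supp y - supp x))"

text \<open>shift k sends (y_i) to (y_{i-k}), i.e. the support is translated by +k.\<close>
definition B_shift :: "int \<Rightarrow> B \<Rightarrow> B" where
  "B_shift k y = Abs_B ((\<lambda>j. j + k) ` supp y)"

type_synonym L2 = "B \<times> int"

definition L_mult :: "L2 \<Rightarrow> L2 \<Rightarrow> L2" where
  "L_mult g h = (B_add (fst g) (B_shift (snd g) (fst h)), snd g + snd h)"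

definition L_one :: L2 where
  "L_one = (B_zero, 0)"

definition L_inv :: "L2 \<Rightarrow> L2" where
  "L_inv g = (B_shift (- snd g) (fst g), - snd g)"

definition L_t :: L2 where
  "L_t = (B_zero, 1)"

definition word_prod :: "L2 list \<Rightarrow> L2" where
  "word_prod ws = foldr L_mult ws L_one"

definition is_word :: "L2 set \<Rightarrow> L2 list \<Rightarrow> bool" where
  "is_word S ws \<longleftrightarrow> set ws \<subseteq> S \<union> L_inv ` S"

definition generates :: "L2 set \<Rightarrow> bool" where
  "generates S \<longleftrightarrow> (\<forall>g. \<exists>ws. is_word S ws \<and> word_prod ws = g)"

definition word_length :: "L2 set \<Rightarrow> L2 \<Rightarrow> nat" where
  "word_length S g = (LEAST n. \<exists>ws. is_word S ws \<and> length ws = n \<and> word_prod ws = g)"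

definition word_dist :: "L2 set \<Rightarrow> L2 \<Rightarrow> L2 \<Rightarrow> nat" where
  "word_dist S g h = word_length S (L_mult (L_inv g) h)"

definition quasi_isometry :: "L2 set \<Rightarrow> (L2 \<Rightarrow> L2) \<Rightarrow> bool" where
  "quasi_isometry S \<Psi> \<longleftrightarrow>
     (\<exists>K C :: real. K \<ge> 1 \<and> C \<ge> 0 \<and>
        (\<forall>g h. real (word_dist S g h) / K - C \<le> real (word_dist S (\<Psi> g) (\<Psi> h))
             \<and> real (word_dist S (\<Psi> g) (\<Psi> h)) \<le> K * real (word_dist S g h) + C)
      \<and> (\<forall>y. \<exists>g. real (word_dist S (\<Psi> g) y) \<le> C))"

definition hausdorff_dist :: "L2 set \<Rightarrow> L2 set \<Rightarrow> L2 set \<Rightarrow> enat" where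
  "hausdorff_dist S P Q =
     max (SUP p\<in>P. INF q\<in>Q. enat (word_dist S p q))
         (SUP q\<in>Q. INF p\<in>P. enat (word_dist S p q))"

text \<open>The left coset ((x_i),k)<t> = {((x_i), k+n) | n}, identified with (x_i) \<in> B.\<close>
definition t_coset :: "B \<Rightarrow> L2 set" where
  "t_coset x = {L_mult (x, 0) (B_zero, n) | n. True}"

definition induced_perm :: "L2 set \<Rightarrow> (L2 \<Rightarrow> L2) \<Rightarrow> (B \<Rightarrow> B) \<Rightarrow> bool" where
  "induced_perm S \<Psi> \<psi> \<longleftrightarrow> bij \<psi> \<and>
     (\<exists>C' :: nat. \<forall>x. hausdorff_dist S (\<Psi> ` t_coset x) (t_coset (\<psi> x)) < enat C')"

definition B_automorphism :: "(B \<Rightarrow> B) \<Rightarrow> bool" where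
  "B_automorphism \<phi> \<longleftrightarrow> bij \<phi> \<and> (\<forall>x y. \<phi> (B_add x y) = B_add (\<phi> x) (\<phi> y))"

definition affine_map :: "(B \<Rightarrow> B) \<Rightarrow> bool" where
  "affine_map f \<longleftrightarrow> (\<exists>\<phi> c. B_automorphism \<phi> \<and> f = (\<lambda>x. B_add (\<phi> x) c))"

text \<open>Shift (x_i) \<mapsto> (x_{i+k}) is B_shift (-k); composing with an affine map.\<close>
definition generalized_affine :: "(B \<Rightarrow> B) \<Rightarrow> bool" where
  "generalized_affine f \<longleftrightarrow> (\<exists>a k. affine_map a \<and> f = B_shift (- k) \<circ> a)"

end

theory Submission
  imports Defs
begin

text \<open>The witness \<open>\<psi>\<close> switches lamp 0 exactly when lamps 1 and 2 are both lit, and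
  \<open>\<Psi> (x, k) = (\<psi> x, k)\<close>. Then \<open>\<Psi>\<close> maps each coset of \<open>\<langle>t\<rangle>\<close> onto a coset, and
  distinct cosets are at infinite Hausdorff distance, so \<open>\<psi>\<close> is the only induced
  permutation. Replacing \<open>g, h\<close> by \<open>\<Psi> g, \<Psi> h\<close> changes \<open>g\<inverse> h\<close> by at most one lamp, lying
  next to a lamp already lit in \<open>g\<inverse> h\<close>; a shortest word for \<open>g\<inverse> h\<close> passes close to every
  lit lamp, so switching that extra lamp costs a bounded number of letters. Hence the
  involution \<open>\<Psi>\<close> is a quasi-isometry. Finally every generalized affine map \<open>f\<close> satisfies
  \<open>f x + f y = f (x + y) + f 0\<close>, which \<open>\<psi>\<close> violates at the unit vectors \<open>x = e\<^sub>1, y = e\<^sub>2\<close>.\<close>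

lemma finite_supp [simp]: "finite (supp x)"
  using supp by auto

lemma supp_Abs_B [simp]: "finite A \<Longrightarrow> supp (Abs_B A) = A"
  by (simp add: Abs_B_inverse)

lemma B_eq_iff: "x = y \<longleftrightarrow> supp x = supp y"
  by (simp add: supp_inject)

lemma supp_B_zero [simp]: "supp B_zero = {}"
  by (simp add: B_zero_def)

lemma supp_B_add [simp]: "supp (B_add x y) = (supp x - supp y) \<union> (supp y - supp x)"
  by (simp add: B_add_def)

lemma supp_B_shift [simp]: "supp (B_shift k y) = {j. j - k \<in> supp y}"
proof -
  have "(\<lambda>j. j + k) ` supp y = {j. j - k \<in> supp y}"
    by (auto simp: image_iff) (metis diff_add_cancel)
  then show ?thesis
    unfolding B_shift_def by (metis finite_imageI finite_supp supp_Abs_B)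
qed

definition lamp :: "int \<Rightarrow> B" where
  "lamp q = Abs_B {q}"

lemma supp_lamp [simp]: "supp (lamp q) = {q}"
  by (simp add: lamp_def)

lemma L_mult_assoc: "L_mult (L_mult a b) c = L_mult a (L_mult b c)"
  by (simp add: L_mult_def B_eq_iff algebra_simps) (auto simp: algebra_simps)

lemma L_mult_one_left [simp]: "L_mult L_one g = g"
  by (cases g) (simp add: L_mult_def L_one_def B_eq_iff)

lemma L_mult_lamp_left: "L_mult (lamp q, 0) (c, j) = (B_add (lamp q) c, j)"
  by (simp add: L_mult_def B_eq_iff)

lemma L_mult_lamp_commute: "L_mult (b, j) (lamp (q - j), 0) = L_mult (lamp q, 0) (b, j)"
  by (simp add: L_mult_def B_eq_iff) auto

lemma L_mult_inv_left: "L_mult (L_inv (x, k)) (y, m) = (B_shift (- k) (B_add x y), m - k)"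
  by (simp add: L_mult_def L_inv_def B_eq_iff) auto

lemma word_prod_Nil [simp]: "word_prod [] = L_one"
  by (simp add: word_prod_def)

lemma word_prod_Cons [simp]: "word_prod (s # w) = L_mult s (word_prod w)"
  by (simp add: word_prod_def)

lemma word_prod_append: "word_prod (u @ v) = L_mult (word_prod u) (word_prod v)"
  by (induction u) (auto simp: L_mult_assoc)

lemma is_word_append [simp]: "is_word S (u @ v) \<longleftrightarrow> is_word S u \<and> is_word S v"
  by (auto simp: is_word_def)

lemma is_word_Cons [simp]: "is_word S (s # v) \<longleftrightarrow> s \<in> S \<union> L_inv ` S \<and> is_word S v"
  by (auto simp: is_word_def)

lemma word_length_le: "is_word S ws \<Longrightarrow> word_prod ws = g \<Longrightarrow> word_length S g \<le> length ws"
  unfolding word_length_def by (rule Least_le) blast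

lemma word_length_word_exists:
  assumes "generates S"
  obtains ws where "is_word S ws" "word_prod ws = g" "length ws = word_length S g"
proof -
  have "\<exists>n ws. is_word S ws \<and> length ws = n \<and> word_prod ws = g"
    using assms unfolding generates_def by blast
  from LeastI_ex[OF this] show ?thesis
    using that unfolding word_length_def by blast
qed

lemma word_dist_pair: "word_dist S (x, k) (y, m) = word_length S (B_shift (- k) (B_add x y), m - k)"
  by (simp add: word_dist_def L_mult_inv_left)

lemma word_dist_self [simp]: "word_dist S g g = 0"
proof -
  obtain x k where g: "g = (x, k)"
    by (cases g)
  have "(B_shift (- k) (B_add x x), k - k) = word_prod []"
    by (simp add: L_one_def B_eq_iff)
  then show ?thesis
    using word_length_le[of S "[]"] by (simp add: g word_dist_pair is_word_def)
qed

definition gen_radius :: "L2 set \<Rightarrow> int" where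
  "gen_radius S = Max (insert 0 (\<Union>s \<in> S \<union> L_inv ` S. abs ` insert (snd s) (supp (fst s))))"

lemma gen_radius_nonneg: "finite S \<Longrightarrow> 0 \<le> gen_radius S"
  by (simp add: gen_radius_def)

lemma gen_radius_bounds:
  assumes "finite S" and "s \<in> S \<union> L_inv ` S"
  shows "\<forall>p \<in> supp (fst s). \<bar>p\<bar> \<le> gen_radius S" and "\<bar>snd s\<bar> \<le> gen_radius S"
  using assms unfolding gen_radius_def by (auto intro!: Max_ge)

lemma word_prod_within_radius:
  assumes "finite S" and "is_word S ws"
  shows "(\<forall>p \<in> supp (fst (word_prod ws)). \<bar>p\<bar> \<le> gen_radius S * int (length ws))
    \<and> \<bar>snd (word_prod ws)\<bar> \<le> gen_radius S * int (length ws)"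
  using assms(2)
proof (induction ws)
  case Nil
  then show ?case
    by (simp add: L_one_def)
next
  case (Cons s w)
  let ?R = "gen_radius S"
  obtain b j where s: "s = (b, j)"
    by (cases s)
  obtain a j' where w: "word_prod w = (a, j')"
    by (cases "word_prod w")
  have b: "\<forall>p \<in> supp b. \<bar>p\<bar> \<le> ?R" and j: "\<bar>j\<bar> \<le> ?R"
    using gen_radius_bounds[OF assms(1), of s] Cons.prems by (auto simp: s)
  have IH: "\<forall>p \<in> supp a. \<bar>p\<bar> \<le> ?R * int (length w)" "\<bar>j'\<bar> \<le> ?R * int (length w)"
    using Cons w by auto
  have len: "?R * int (length (s # w)) = ?R + ?R * int (length w)"
    by (simp add: algebra_simps)
  have "\<bar>p\<bar> \<le> ?R * int (length (s # w))" if "p \<in> supp b \<or> p - j \<in> supp a" for p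
    using that
  proof
    assume "p \<in> supp b"
    then have "\<bar>p\<bar> \<le> ?R"
      using b by blast
    moreover have "0 \<le> ?R * int (length w)"
      using gen_radius_nonneg[OF assms(1)] by simp
    ultimately show ?thesis
      unfolding len by linarith
  next
    assume "p - j \<in> supp a"
    then show ?thesis
      using IH(1) j unfolding len by fastforce
  qed
  moreover have "\<bar>j + j'\<bar> \<le> ?R * int (length (s # w))"
    using j IH(2) unfolding len by linarith
  ultimately show ?case
    by (auto simp: s w L_mult_def)
qed

lemma abs_lamp_le_word_length:
  assumes "finite S" and "generates S" and "p \<in> supp c"
  shows "\<bar>p\<bar> \<le> gen_radius S * int (word_length S (c, j))"
proof -
  obtain ws where "is_word S ws" "word_prod ws = (c, j)" "length ws = word_length S (c, j)"
    using word_length_word_exists[OF assms(2)] .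
  then show ?thesis
    using word_prod_within_radius[OF assms(1)] assms(3) by fastforce
qed

definition lamp_cost :: "L2 set \<Rightarrow> int \<Rightarrow> nat" where
  "lamp_cost S r = Max ((\<lambda>q. word_length S (lamp q, 0)) ` {-r..r})"

lemma word_length_lamp_le_cost: "\<bar>q\<bar> \<le> r \<Longrightarrow> word_length S (lamp q, 0) \<le> lamp_cost S r"
  unfolding lamp_cost_def by (rule Max_ge) (auto simp: abs_le_iff)

text \<open>A lit lamp \<open>p\<close> of \<open>word_prod ws\<close> was lit by some letter of \<open>ws\<close> while the lamplighter
  stood within \<open>gen_radius S\<close> of \<open>p\<close>; inserting there a word for a lamp near \<open>p\<close> toggles it.\<close>
lemma word_toggle_near_lit_lamp:
  assumes "finite S" and "generates S"
  shows "is_word S ws \<Longrightarrow> p \<in> supp (fst (word_prod ws)) \<Longrightarrow> \<bar>q - p\<bar> \<le> D \<Longrightarrow>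
    \<exists>ws'. is_word S ws' \<and> length ws' \<le> length ws + lamp_cost S (gen_radius S + D)
      \<and> word_prod ws' = L_mult (lamp q, 0) (word_prod ws)"
proof (induction ws arbitrary: p q)
  case Nil
  then show ?case
    by (simp add: L_one_def)
next
  case (Cons s w)
  obtain b j where s: "s = (b, j)"
    by (cases s)
  obtain a j' where w: "word_prod w = (a, j')"
    by (cases "word_prod w")
  have s_gen: "s \<in> S \<union> L_inv ` S" and w_word: "is_word S w"
    using Cons.prems by auto
  have "p \<in> supp b \<or> p - j \<in> supp a"
    using Cons.prems(2) by (auto simp: s w L_mult_def)
  then show ?case
  proof
    assume "p \<in> supp b"
    then have "\<bar>q\<bar> \<le> gen_radius S + D"
      using gen_radius_bounds(1)[OF assms(1) s_gen] Cons.prems(3) by (force simp: s)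
    then obtain u where "is_word S u" "word_prod u = (lamp q, 0)"
        "length u \<le> lamp_cost S (gen_radius S + D)"
      using word_length_word_exists[OF assms(2)] word_length_lamp_le_cost by metis
    then show ?thesis
      using Cons.prems(1) by (intro exI[of _ "u @ s # w"]) (auto simp: word_prod_append)
  next
    assume "p - j \<in> supp a"
    moreover have "\<bar>(q - j) - (p - j)\<bar> \<le> D"
      using Cons.prems(3) by simp
    ultimately obtain ws' where ws': "is_word S ws'"
        "length ws' \<le> length w + lamp_cost S (gen_radius S + D)"
        "word_prod ws' = L_mult (lamp (q - j), 0) (word_prod w)"
      using Cons.IH[OF w_word] w by fastforce
    have "word_prod (s # ws') = L_mult (lamp q, 0) (word_prod (s # w))"
      by (simp add: ws'(3) s flip: L_mult_assoc add: L_mult_lamp_commute)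
    then show ?thesis
      using ws' s_gen by (intro exI[of _ "s # ws'"]) auto
  qed
qed

lemma word_length_toggle_near_lit_lamp:
  assumes "finite S" and "generates S" and "p \<in> supp c" and "\<bar>q - p\<bar> \<le> D"
  shows "word_length S (B_add (lamp q) c, j)
    \<le> word_length S (c, j) + lamp_cost S (gen_radius S + D)"
proof -
  obtain ws where ws: "is_word S ws" "word_prod ws = (c, j)" "length ws = word_length S (c, j)"
    using word_length_word_exists[OF assms(2)] .
  obtain ws' where "is_word S ws'" "length ws' \<le> length ws + lamp_cost S (gen_radius S + D)"
      "word_prod ws' = (B_add (lamp q) c, j)"
    using word_toggle_near_lit_lamp[OF assms(1,2) ws(1), of p q D] assms(3,4) ws(2)
    by (auto simp: L_mult_lamp_left)
  then show ?thesis
    using word_length_le ws(3) by fastforce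
qed

lemma quasi_isometry_involution:
  assumes "\<And>g. \<Phi> (\<Phi> g) = g" and "\<And>g h. word_dist S (\<Phi> g) (\<Phi> h) \<le> word_dist S g h + M"
  shows "quasi_isometry S \<Phi>"
proof -
  have lower: "real (word_dist S g h) - real M \<le> real (word_dist S (\<Phi> g) (\<Phi> h))" for g h
    using assms(2)[of "\<Phi> g" "\<Phi> h"] by (simp add: assms(1))
  have upper: "real (word_dist S (\<Phi> g) (\<Phi> h)) \<le> real (word_dist S g h) + real M" for g h
    using assms(2)[of g h] by (simp flip: of_nat_add)
  have onto: "\<exists>g. real (word_dist S (\<Phi> g) y) \<le> real M" for y
    by (intro exI[of _ "\<Phi> y"]) (simp add: assms(1))
  show ?thesis
    unfolding quasi_isometry_def
    by (rule exI[of _ 1], rule exI[of _ "real M"])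
      (use lower upper onto in simp)
qed

lemma t_coset_eq: "t_coset x = {(x, n) | n. True}"
proof -
  have "B_add x (B_shift 0 B_zero) = x"
    by (simp add: B_eq_iff)
  then show ?thesis
    by (simp add: t_coset_def L_mult_def)
qed

lemma hausdorff_dist_self: "hausdorff_dist S P P = 0"
proof -
  have "hausdorff_dist S P P \<le> 0"
    unfolding hausdorff_dist_def
    by (intro max.boundedI SUP_least order.trans[OF INF_lower]) (auto simp: zero_enat_def)
  then show ?thesis
    by simp
qed

text \<open>Far out along \<open>t_coset y\<close>, every path to \<open>t_coset z\<close> must reach back to a lamp
  where \<open>y\<close> and \<open>z\<close> differ.\<close>
lemma hausdorff_dist_t_coset_distinct:
  assumes "finite S" and "generates S" and "y \<noteq> z"
  shows "hausdorff_dist S (t_coset y) (t_coset z) = \<infinity>"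
proof -
  obtain i where i: "i \<in> supp (B_add y z)"
    using assms(3) by (auto simp: B_eq_iff)
  have lower: "enat C \<le> hausdorff_dist S (t_coset y) (t_coset z)" for C
  proof -
    define n where "n = i + gen_radius S * int C + 1"
    have "C \<le> word_dist S (y, n) (z, m)" for m
    proof -
      have "i - n \<in> supp (B_shift (- n) (B_add y z))"
        using i by simp
      then have "\<bar>i - n\<bar> \<le> gen_radius S * int (word_dist S (y, n) (z, m))"
        unfolding word_dist_pair by (rule abs_lamp_le_word_length[OF assms(1,2)])
      then have "gen_radius S * int C < gen_radius S * int (word_dist S (y, n) (z, m))"
        unfolding n_def by linarith
      then show ?thesis
        using gen_radius_nonneg[OF assms(1)] by (simp add: mult_less_cancel_left)
    qed
    then have "enat C \<le> (INF q \<in> t_coset z. enat (word_dist S (y, n) q))"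
      by (auto simp: t_coset_eq intro!: INF_greatest)
    also have "\<dots> \<le> (SUP p \<in> t_coset y. INF q \<in> t_coset z. enat (word_dist S p q))"
      by (rule SUP_upper) (simp add: t_coset_eq)
    finally show ?thesis
      unfolding hausdorff_dist_def by (simp add: le_max_iff_disj)
  qed
  show ?thesis
  proof (cases "hausdorff_dist S (t_coset y) (t_coset z)")
    case (enat k)
    then show ?thesis
      using lower[of "Suc k"] by simp
  qed simp
qed

lemma induced_perm_coset_map:
  assumes "bij f" and "\<forall>x. \<Phi> ` t_coset x = t_coset (f x)"
  shows "induced_perm S \<Phi> f"
  unfolding induced_perm_def using assms by (auto simp: hausdorff_dist_self zero_enat_def)

lemma induced_perm_unique:
  assumes "finite S" and "generates S" and "\<forall>x. \<Phi> ` t_coset x = t_coset (f x)"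
    and "induced_perm S \<Phi> \<psi>"
  shows "\<psi> = f"
proof
  fix x
  obtain C :: nat where "\<forall>x. hausdorff_dist S (\<Phi> ` t_coset x) (t_coset (\<psi> x)) < enat C"
    using assms(4) unfolding induced_perm_def by blast
  then have C: "hausdorff_dist S (t_coset (f x)) (t_coset (\<psi> x)) < enat C"
    using assms(3) by simp
  show "\<psi> x = f x"
  proof (rule ccontr)
    assume "\<psi> x \<noteq> f x"
    then have "hausdorff_dist S (t_coset (f x)) (t_coset (\<psi> x)) = \<infinity>"
      by (intro hausdorff_dist_t_coset_distinct[OF assms(1,2)]) simp
    with C show False
      by simp
  qed
qed

lemma B_automorphism_zero:
  assumes "B_automorphism \<phi>"
  shows "\<phi> B_zero = B_zero"
proof -
  have "\<phi> B_zero = \<phi> (B_add B_zero B_zero)"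
    by (rule arg_cong[where f = \<phi>]) (simp add: B_eq_iff)
  also have "\<dots> = B_add (\<phi> B_zero) (\<phi> B_zero)"
    using assms unfolding B_automorphism_def by blast
  finally show ?thesis
    by (simp add: B_eq_iff)
qed

lemma generalized_affine_add:
  assumes "generalized_affine f"
  shows "B_add (f x) (f y) = B_add (f (B_add x y)) (f B_zero)"
proof -
  obtain \<phi> c k where \<phi>: "B_automorphism \<phi>" and f: "f = B_shift (- k) \<circ> (\<lambda>x. B_add (\<phi> x) c)"
    using assms unfolding generalized_affine_def affine_map_def by blast
  have "\<phi> (B_add x y) = B_add (\<phi> x) (\<phi> y)"
    using \<phi> unfolding B_automorphism_def by blast
  then show ?thesis
    by (simp add: f B_eq_iff B_automorphism_zero[OF \<phi>]) blast
qed

definition psi :: "B \<Rightarrow> B" where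
  "psi x = (if 1 \<in> supp x \<and> 2 \<in> supp x then B_add (lamp 0) x else x)"

definition Psi :: "L2 \<Rightarrow> L2" where
  "Psi g = (psi (fst g), snd g)"

lemma supp_psi:
  "supp (psi x) = (if 1 \<in> supp x \<and> 2 \<in> supp x then supp (B_add (lamp 0) x) else supp x)"
  by (simp add: psi_def)

lemma psi_psi [simp]: "psi (psi x) = x"
  by (simp add: B_eq_iff supp_psi) auto

lemma bij_psi: "bij psi"
  by (rule o_bij[of psi]) (auto simp: fun_eq_iff)

lemma Psi_Psi [simp]: "Psi (Psi g) = g"
  by (simp add: Psi_def)

lemma Psi_t_coset: "Psi ` t_coset x = t_coset (psi x)"
  by (auto simp: t_coset_eq Psi_def image_iff)

lemma psi_not_generalized_affine: "\<not> generalized_affine psi"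
proof
  assume "generalized_affine psi"
  from generalized_affine_add[OF this, of "lamp 1" "lamp 2"]
  have "supp (B_add (psi (lamp 1)) (psi (lamp 2)))
      = supp (B_add (psi (B_add (lamp 1) (lamp 2))) (psi B_zero))"
    by simp
  then have "{1, 2 :: int} = {0, 1, 2}"
    by (simp add: supp_psi insert_commute)
  then show False
    by (simp add: insert_eq_iff)
qed

lemma B_add_psi_cases:
  obtains "B_add (psi x) (psi y) = B_add x y"
  | "B_add (psi x) (psi y) = B_add (lamp 0) (B_add x y)"
    and "1 \<in> supp (B_add x y) \<or> 2 \<in> supp (B_add x y)"
proof (cases "(1 \<in> supp x \<and> 2 \<in> supp x) = (1 \<in> supp y \<and> 2 \<in> supp y)")
  case True
  then have "B_add (psi x) (psi y) = B_add x y"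
    by (auto simp: B_eq_iff supp_psi)
  then show ?thesis
    by (rule that(1))
next
  case False
  then show ?thesis
    by (intro that(2)) (auto simp: B_eq_iff supp_psi)
qed

lemma word_dist_Psi_le:
  assumes "finite S" and "generates S"
  shows "word_dist S (Psi g) (Psi h) \<le> word_dist S g h + lamp_cost S (gen_radius S + 2)"
proof -
  obtain x k where g: "g = (x, k)"
    by (cases g)
  obtain y m where h: "h = (y, m)"
    by (cases h)
  let ?c = "B_shift (- k) (B_add x y)"
  show ?thesis
  proof (cases x y rule: B_add_psi_cases)
    case 1
    then show ?thesis
      by (simp add: g h Psi_def word_dist_pair)
  next
    case 2
    have "B_shift (- k) (B_add (psi x) (psi y)) = B_add (lamp (- k)) ?c"
      unfolding 2(1) by (simp add: B_eq_iff set_eq_iff eq_neg_iff_add_eq_0)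
    moreover obtain p where "p \<in> supp ?c" and "\<bar>- k - p\<bar> \<le> 2"
    proof (cases "1 \<in> supp (B_add x y)")
      case True
      then show ?thesis
        by (intro that[of "1 - k"]) simp_all
    next
      case False
      then have "2 \<in> supp (B_add x y)"
        using 2(2) by blast
      then show ?thesis
        by (intro that[of "2 - k"]) simp_all
    qed
    then have "word_length S (B_add (lamp (- k)) ?c, m - k)
        \<le> word_length S (?c, m - k) + lamp_cost S (gen_radius S + 2)"
      by (rule word_length_toggle_near_lit_lamp[OF assms])
    ultimately show ?thesis
      by (simp add: g h Psi_def word_dist_pair)
  qed
qed

theorem theorem1p2:
  fixes S :: "L2 set"
  assumes "finite S" and "generates S"
  shows "\<exists>\<Psi>. quasi_isometry S \<Psi> \<and> (\<exists>\<psi>. induced_perm S \<Psi> \<psi>)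
              \<and> (\<forall>\<psi>. induced_perm S \<Psi> \<psi> \<longrightarrow> \<not> generalized_affine \<psi>)"
proof (intro exI conjI allI impI)
  show "quasi_isometry S Psi"
    using word_dist_Psi_le[OF assms] by (rule quasi_isometry_involution[OF Psi_Psi])
  show "induced_perm S Psi psi"
    using bij_psi Psi_t_coset by (intro induced_perm_coset_map) auto
  fix \<psi>
  assume "induced_perm S Psi \<psi>"
  then have "\<psi> = psi"
    using induced_perm_unique[OF assms] Psi_t_coset by blast
  then show "\<not> generalized_affine \<psi>"
    using psi_not_generalized_affine by simp
qed

end
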